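(* Let $k\ge1$ be an integer. Every uniformizable $k$-primal topological space is a functional Alexandroff space.
   Context: For a topological space $X$ and $a\in X$, $V(a):=\bigcap\{U: U\text{ open}, a\in U\}$. For $f:X\to X$ and $a\in X$, $V_f(a):=\bigcup_{n\ge0}f^{-n}(a)=\{x:\exists n\ge0,\ f^n(x)=a\}$. A topological space $X$ is $k$-primal if there exist maps $f_1,\dots,f_k:X\to X$ such that for each $a\in X$ the set $V_{f_1}(a)\cap\cdots\cap V_{f_k}(a)$ is open and is the smallest open neighbourhood of $a$ (i.e. equals $V(a)$ and is open). $X$ is a functional Alexandroff space if there is $f:X\to X$ such that the topology with basis $\{V_f(a):a\in X\}$ equals the topology of $X$ (equivalently, $X$ is $1$-primal). $X$ is uniformizable if its topology is induced by some uniform structure on $X$. *)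

theory Defs
  imports "HOL-Analysis.Analysis"
begin

definition Vnbhd :: "'a topology \<Rightarrow> 'a \<Rightarrow> 'a set" where
  "Vnbhd T a = \<Inter>{U. openin T U \<and> a \<in> U}"

definition Vfun :: "'a set \<Rightarrow> ('a \<Rightarrow> 'a) \<Rightarrow> 'a \<Rightarrow> 'a set" where
  "Vfun X f a = {x \<in> X. \<exists>n. (f ^^ n) x = a}"

definition k_primal :: "nat \<Rightarrow> 'a topology \<Rightarrow> bool" where
  "k_primal k T \<longleftrightarrow>
     (\<exists>f :: nat \<Rightarrow> 'a \<Rightarrow> 'a.
        (\<forall>i<k. f i ` topspace T \<subseteq> topspace T) \<and>
        (\<forall>a \<in> topspace T.
           openin T (topspace T \<inter> (\<Inter>i\<in>{..<k}. Vfun (topspace T) (f i) a)) \<and>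
           topspace T \<inter> (\<Inter>i\<in>{..<k}. Vfun (topspace T) (f i) a) = Vnbhd T a))"

definition functional_alexandroff :: "'a topology \<Rightarrow> bool" where
  "functional_alexandroff T \<longleftrightarrow>
     (\<exists>f. f ` topspace T \<subseteq> topspace T \<and>
        (\<forall>U. openin T U \<longleftrightarrow>
              (\<exists>B. B \<subseteq> (Vfun (topspace T) f) ` topspace T \<and> U = \<Union>B)))"

definition uniformity_on :: "'a set \<Rightarrow> ('a \<times> 'a) set set \<Rightarrow> bool" where
  "uniformity_on X \<U> \<longleftrightarrow>
     \<U> \<noteq> {} \<and>
     (\<forall>E\<in>\<U>. E \<subseteq> X \<times> X \<and> Id_on X \<subseteq> E) \<and>
     (\<forall>E\<in>\<U>. \<forall>F. E \<subseteq> F \<and> F \<subseteq> X \<times> X \<longrightarrow> F \<in> \<U>) \<and>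
     (\<forall>E\<in>\<U>. \<forall>F\<in>\<U>. E \<inter> F \<in> \<U>) \<and>
     (\<forall>E\<in>\<U>. E\<inverse> \<in> \<U>) \<and>
     (\<forall>E\<in>\<U>. \<exists>F\<in>\<U>. F O F \<subseteq> E)"

definition uniformizable :: "'a topology \<Rightarrow> bool" where
  "uniformizable T \<longleftrightarrow>
     (\<exists>\<U>. uniformity_on (topspace T) \<U> \<and>
        (\<forall>U. openin T U \<longleftrightarrow>
              U \<subseteq> topspace T \<and> (\<forall>x\<in>U. \<exists>E\<in>\<U>. E `` {x} \<subseteq> U)))"

end

theory Submission
  imports Defs
begin

text \<open>In a uniformizable space the specialization preorder is symmetric: x lies in V(a)
  iff a lies in V(x). Hence the minimal neighbourhoods V(a) are the classes of an
  equivalence relation, and by k-primality (k \<ge> 1) the first of the k maps, f, sends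
  every point of V(a) to a after finitely many steps. The first-return map g of f to
  the classes (the first positive iterate of f that lands back in the class of x) then
  has exactly the classes as its basins V_g(a), and these form a basis of the topology
  because every V(a) is open.\<close>

lemma Vnbhd_self: "a \<in> Vnbhd T a"
  unfolding Vnbhd_def by blast

lemma Vnbhd_subset_openin: "openin T U \<Longrightarrow> a \<in> U \<Longrightarrow> Vnbhd T a \<subseteq> U"
  unfolding Vnbhd_def by blast

lemma Vnbhd_subset_topspace: "a \<in> topspace T \<Longrightarrow> Vnbhd T a \<subseteq> topspace T"
  by (simp add: Vnbhd_subset_openin)

lemma Vnbhd_trans: "x \<in> Vnbhd T a \<Longrightarrow> a \<in> Vnbhd T b \<Longrightarrow> x \<in> Vnbhd T b"
  unfolding Vnbhd_def by blast

lemma openin_iff_Union_Vnbhd: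
  assumes "\<forall>a\<in>topspace T. openin T (Vnbhd T a)"
  shows "openin T U \<longleftrightarrow> (\<exists>B. B \<subseteq> Vnbhd T ` topspace T \<and> U = \<Union>B)"
proof
  assume U: "openin T U"
  then have "U = \<Union>(Vnbhd T ` U)"
    using Vnbhd_self Vnbhd_subset_openin by fast
  moreover have "Vnbhd T ` U \<subseteq> Vnbhd T ` topspace T"
    using openin_subset[OF U] by blast
  ultimately show "\<exists>B. B \<subseteq> Vnbhd T ` topspace T \<and> U = \<Union>B"
    by blast
next
  assume "\<exists>B. B \<subseteq> Vnbhd T ` topspace T \<and> U = \<Union>B"
  then show "openin T U"
    using assms by auto
qed

lemma uniformity_onD:
  assumes "uniformity_on X \<U>" and "E \<in> \<U>"
  shows "E \<subseteq> X \<times> X" and "Id_on X \<subseteq> E" and "E\<inverse> \<in> \<U>" and "\<exists>F\<in>\<U>. F O F \<subseteq> E"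
proof -
  have "(\<forall>E\<in>\<U>. E \<subseteq> X \<times> X \<and> Id_on X \<subseteq> E) \<and> (\<forall>E\<in>\<U>. E\<inverse> \<in> \<U>) \<and>
      (\<forall>E\<in>\<U>. \<exists>F\<in>\<U>. F O F \<subseteq> E)"
    using assms(1) unfolding uniformity_on_def by (elim conjE) (intro conjI)
  with assms(2) show "E \<subseteq> X \<times> X" and "Id_on X \<subseteq> E" and "E\<inverse> \<in> \<U>" and "\<exists>F\<in>\<U>. F O F \<subseteq> E"
    by blast+
qed

lemma uniformity_entourage_image_nhd:
  assumes unif: "uniformity_on (topspace T) \<U>"
    and opens: "\<forall>U. openin T U \<longleftrightarrow> U \<subseteq> topspace T \<and> (\<forall>x\<in>U. \<exists>E\<in>\<U>. E `` {x} \<subseteq> U)"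
    and G: "G \<in> \<U>" and a: "a \<in> topspace T"
  shows "\<exists>W. openin T W \<and> a \<in> W \<and> W \<subseteq> G `` {a}"
proof -
  define W where "W = {y \<in> topspace T. \<exists>H\<in>\<U>. H `` {y} \<subseteq> G `` {a}}"
  have "\<exists>E\<in>\<U>. E `` {y} \<subseteq> W" if "y \<in> W" for y
  proof -
    obtain H where H: "H \<in> \<U>" "H `` {y} \<subseteq> G `` {a}"
      using \<open>y \<in> W\<close> unfolding W_def by blast
    obtain F where F: "F \<in> \<U>" "F O F \<subseteq> H"
      using uniformity_onD(4)[OF unif H(1)] by blast
    then have "F `` {y} \<subseteq> W"
      using uniformity_onD(1)[OF unif F(1)] F H(2) unfolding W_def by blast
    with F(1) show ?thesis by blast
  qed
  then have "openin T W"
    using opens unfolding W_def by blast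
  moreover have "a \<in> W"
    using a G unfolding W_def by blast
  moreover have "W \<subseteq> G `` {a}"
    using uniformity_onD(2)[OF unif] unfolding W_def by (fastforce simp: Id_on_def)
  ultimately show ?thesis by blast
qed

lemma uniformizable_Vnbhd_sym:
  assumes "uniformizable T" and a: "a \<in> topspace T" and x: "x \<in> Vnbhd T a"
  shows "a \<in> Vnbhd T x"
  unfolding Vnbhd_def
proof (intro InterI, clarify)
  fix U assume U: "openin T U" "x \<in> U"
  obtain \<U> where unif: "uniformity_on (topspace T) \<U>"
    and opens: "\<forall>U. openin T U \<longleftrightarrow> U \<subseteq> topspace T \<and> (\<forall>x\<in>U. \<exists>E\<in>\<U>. E `` {x} \<subseteq> U)"
    using assms(1) unfolding uniformizable_def by blast
  obtain E where E: "E \<in> \<U>" "E `` {x} \<subseteq> U"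
    using opens U by blast
  obtain W where "openin T W" "a \<in> W" "W \<subseteq> E\<inverse> `` {a}"
    using uniformity_entourage_image_nhd[OF unif opens uniformity_onD(3)[OF unif E(1)] a] by blast
  then have "(x, a) \<in> E"
    using x Vnbhd_subset_openin by fast
  with E(2) show "a \<in> U" by blast
qed

definition specialization_rel :: "'a topology \<Rightarrow> 'a rel" where
  "specialization_rel T = {(a, x). a \<in> topspace T \<and> x \<in> Vnbhd T a}"

lemma specialization_rel_Image:
  "a \<in> topspace T \<Longrightarrow> specialization_rel T `` {a} = Vnbhd T a"
  unfolding specialization_rel_def by blast

lemma equiv_specialization_rel:
  assumes "uniformizable T"
  shows "equiv (topspace T) (specialization_rel T)"
proof (rule equivI)
  show "specialization_rel T \<subseteq> topspace T \<times> topspace T"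
    by (auto simp: specialization_rel_def intro: subsetD[OF Vnbhd_subset_topspace])
  show "refl_on (topspace T) (specialization_rel T)"
    by (simp add: specialization_rel_def refl_on_def Vnbhd_self)
  show "sym (specialization_rel T)"
  proof (rule symI)
    fix a x assume "(a, x) \<in> specialization_rel T"
    then have "a \<in> topspace T" "x \<in> Vnbhd T a"
      unfolding specialization_rel_def by simp_all
    then show "(x, a) \<in> specialization_rel T"
      using uniformizable_Vnbhd_sym[OF assms] subsetD[OF Vnbhd_subset_topspace]
      by (auto simp: specialization_rel_def)
  qed
  show "trans (specialization_rel T)"
    by (rule transI) (auto simp: specialization_rel_def intro: Vnbhd_trans)
qed

definition first_return :: "('a \<Rightarrow> 'a) \<Rightarrow> 'a rel \<Rightarrow> 'a \<Rightarrow> 'a" where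
  "first_return f R x =
     (if \<exists>m>0. (f ^^ m) x \<in> R `` {x}
      then (f ^^ (LEAST m. 0 < m \<and> (f ^^ m) x \<in> R `` {x})) x else x)"

lemma first_return_eq:
  "\<exists>m>0. (f ^^ m) x \<in> R `` {x} \<Longrightarrow>
    first_return f R x = (f ^^ (LEAST m. 0 < m \<and> (f ^^ m) x \<in> R `` {x})) x"
  unfolding first_return_def by (rule if_P)

lemma first_return_in_class:
  assumes "equiv X R" and "x \<in> X"
  shows "(x, first_return f R x) \<in> R"
proof (cases "\<exists>m>0. (f ^^ m) x \<in> R `` {x}")
  case True
  then have "(f ^^ (LEAST m. 0 < m \<and> (f ^^ m) x \<in> R `` {x})) x \<in> R `` {x}"
    by (metis (mono_tags, lifting) LeastI)
  with True show ?thesis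
    by (simp only: first_return_eq) blast
next
  case False
  then have "first_return f R x = x"
    unfolding first_return_def by (rule if_not_P)
  then show ?thesis
    using equiv_class_self[OF assms] by simp
qed

lemma funpow_first_return_in_class:
  assumes R: "equiv X R" and "x \<in> X"
  shows "(x, (first_return f R ^^ n) x) \<in> R"
proof (induction n)
  case 0
  then show ?case
    using equiv_class_self[OF assms] by simp
next
  case (Suc n)
  then have "(first_return f R ^^ n) x \<in> X"
    using equiv_type[OF R] by blast
  then have "((first_return f R ^^ n) x, (first_return f R ^^ Suc n) x) \<in> R"
    using first_return_in_class[OF R] by simp
  with Suc.IH show ?case
    using R by (auto elim: equivE transE)
qed

text \<open>Induction on the f-time j: the first return happens at some time m \<le> j and
  lands in the same class, from where the remaining j - m steps are shorter.\<close>
lemma first_return_reaches_class_iterates: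
  assumes R: "equiv X R"
  shows "x \<in> X \<Longrightarrow> (x, (f ^^ j) x) \<in> R \<Longrightarrow> \<exists>n. (first_return f R ^^ n) x = (f ^^ j) x"
proof (induction j arbitrary: x rule: less_induct)
  case (less j)
  show ?case
  proof (cases "j = 0")
    case True
    then show ?thesis
      by (metis funpow_0)
  next
    case False
    define P where "P m \<longleftrightarrow> 0 < m \<and> (f ^^ m) x \<in> R `` {x}" for m
    have "P j"
      using False less.prems unfolding P_def by simp
    define m where "m = (LEAST m. P m)"
    have "m \<le> j" "0 < m"
      using Least_le[of P, OF \<open>P j\<close>] LeastI[of P, OF \<open>P j\<close>] unfolding m_def P_def by auto
    define y where "y = first_return f R x"
    have y: "y = (f ^^ m) x"
      using \<open>P j\<close> first_return_eq[of f x R] unfolding y_def m_def P_def by blast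
    have "(x, y) \<in> R"
      using first_return_in_class[OF R less.prems(1)] unfolding y_def .
    then have "y \<in> X" and "R `` {y} = R `` {x}"
      using equiv_class_eq_iff[OF R] by blast+
    moreover have "(f ^^ (j - m)) y = (f ^^ j) x"
      using \<open>m \<le> j\<close> by (simp add: y flip: funpow_add[THEN fun_cong, unfolded comp_def])
    ultimately obtain n where "(first_return f R ^^ n) y = (f ^^ j) x"
      using less.IH[of "j - m" y] less.prems(2) \<open>0 < m\<close> \<open>m \<le> j\<close> by auto
    then have "(first_return f R ^^ Suc n) x = (f ^^ j) x"
      by (simp add: y_def funpow_Suc_right del: funpow.simps)
    then show ?thesis by blast
  qed
qed

lemma Vfun_first_return:
  assumes R: "equiv X R" and basins: "\<forall>a\<in>X. R `` {a} \<subseteq> Vfun X f a" and a: "a \<in> X"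
  shows "Vfun X (first_return f R) a = R `` {a}"
proof
  show "Vfun X (first_return f R) a \<subseteq> R `` {a}"
  proof
    fix x assume "x \<in> Vfun X (first_return f R) a"
    then obtain n where "x \<in> X" and "(first_return f R ^^ n) x = a"
      unfolding Vfun_def by blast
    then have "(x, a) \<in> R"
      using funpow_first_return_in_class[OF R] by blast
    then show "x \<in> R `` {a}"
      using R by (auto elim: equivE symE)
  qed
next
  show "R `` {a} \<subseteq> Vfun X (first_return f R) a"
  proof
    fix x assume x: "x \<in> R `` {a}"
    then obtain j where "x \<in> X" and j: "(f ^^ j) x = a"
      using basins a unfolding Vfun_def by blast
    moreover have "(x, (f ^^ j) x) \<in> R"
      unfolding j using x R by (auto elim: equivE symE)
    ultimately obtain n where "(first_return f R ^^ n) x = a"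
      using first_return_reaches_class_iterates[OF R] j by blast
    with \<open>x \<in> X\<close> show "x \<in> Vfun X (first_return f R) a"
      unfolding Vfun_def by blast
  qed
qed

theorem mainTheorem7:
  fixes T :: "'a topology" and k :: nat
  assumes "k \<ge> 1" and "uniformizable T" and "k_primal k T"
  shows "functional_alexandroff T"
proof -
  define X where "X = topspace T"
  obtain f :: "nat \<Rightarrow> 'a \<Rightarrow> 'a" where
    primal: "\<forall>a \<in> X. openin T (X \<inter> (\<Inter>i\<in>{..<k}. Vfun X (f i) a)) \<and>
                      X \<inter> (\<Inter>i\<in>{..<k}. Vfun X (f i) a) = Vnbhd T a"
    using assms(3) unfolding k_primal_def X_def by blast
  have opens: "\<forall>a\<in>X. openin T (Vnbhd T a)"
    using primal by auto
  have basins: "\<forall>a\<in>X. specialization_rel T `` {a} \<subseteq> Vfun X (f 0) a"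
    using primal assms(1) specialization_rel_Image unfolding X_def by fastforce
  define g where "g = first_return (f 0) (specialization_rel T)"
  have R: "equiv X (specialization_rel T)"
    using equiv_specialization_rel[OF assms(2)] unfolding X_def .
  have g_maps: "g ` X \<subseteq> X"
    using first_return_in_class[OF R] R unfolding g_def equiv_def by blast
  have basis: "Vfun X g ` X = Vnbhd T ` X"
  proof (rule image_cong[OF refl])
    show "Vfun X g a = Vnbhd T a" if "a \<in> X" for a
      using Vfun_first_return[OF R basins that] specialization_rel_Image that
      unfolding g_def X_def by simp
  qed
  have "openin T U \<longleftrightarrow> (\<exists>B. B \<subseteq> Vfun X g ` X \<and> U = \<Union>B)" for U
    unfolding basis using openin_iff_Union_Vnbhd[of T U] opens unfolding X_def by simp
  with g_maps show ?thesis
    unfolding functional_alexandroff_def X_def by blast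
qed

end
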